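(* Let $G=\mathrm{Circ}(a_0,\ldots,a_{n-1})$ be a Hermitian circulant of order $n$ with universal perfect state transfer. If $d$ is an odd divisor of $n$ such that $n/d$ is prime, then $a_d\neq 0$.
   Context: $\mathrm{Circ}(a_0,\ldots,a_{n-1})$ denotes the $n\times n$ matrix $C$ with $C_{j,k}=a_{k-j}$ (indices mod $n$). A graph with Hermitian adjacency matrix $A$ has universal perfect state transfer if for every pair of vertices $v,w$ there is $t>0$ with $|\langle w|e^{-\mathtt{i} At}|v\rangle|=1$. *)

theory Defs
  imports Complex_Main "Jordan_Normal_Form.Matrix"
begin

definition circ :: "nat \<Rightarrow> (nat \<Rightarrow> complex) \<Rightarrow> complex mat" where
  "circ n a = mat n n (\<lambda>(j, k). a (nat ((int k - int j) mod int n)))"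

definition hermitian_mat :: "complex mat \<Rightarrow> bool" where
  "hermitian_mat A \<longleftrightarrow> dim_row A = dim_col A \<and>
     (\<forall>i < dim_row A. \<forall>j < dim_row A. A $$ (j, i) = cnj (A $$ (i, j)))"

definition mat_exp :: "complex mat \<Rightarrow> complex mat" where
  "mat_exp A = mat (dim_row A) (dim_col A)
     (\<lambda>(i, j). \<Sum>m. (A ^\<^sub>m m) $$ (i, j) / of_nat (fact m))"

definition universal_pst :: "complex mat \<Rightarrow> bool" where
  "universal_pst A \<longleftrightarrow> (\<forall>v < dim_row A. \<forall>w < dim_row A. v \<noteq> w \<longrightarrow>
     (\<exists>t::real. t > 0 \<and> cmod (mat_exp ((- \<i> * complex_of_real t) \<cdot>\<^sub>m A) $$ (w, v)) = 1))"

end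

theory Submission
  imports Defs "HOL-Analysis.Complex_Transcendental" "HOL-Computational_Algebra.Polynomial_Factorial"
begin

text \<open>The eigenvalues of \<open>Circ(a)\<close> are \<open>\<lambda>_m = \<Sum>_s a_s \<omega>^(ms)\<close> with \<open>\<omega> = exp(2\<pi>i/n)\<close>; they
  are real because the matrix is Hermitian, and \<open>exp(-iAt)_{1,0} = (1/n) \<Sum>_m exp(-it\<lambda>_m) \<omega>^m\<close>.
  Perfect state transfer from vertex 0 to vertex 1 forces these \<open>n\<close> unimodular terms to coincide,
  so \<open>\<lambda>_m = \<lambda>_0 + \<kappa> e_m\<close> with \<open>\<kappa> = 2\<pi>/(tn)\<close> and integers \<open>e_m \<equiv> m (mod n)\<close>.
  Inverting the Fourier transform gives \<open>n a_d = \<kappa> \<Sum>_m e_m \<zeta>^m\<close>, where \<open>\<zeta> = \<omega>^(-d)\<close> is a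
  primitive \<open>p\<close>-th root of unity, \<open>p = n/d\<close>. Since \<open>1 + x + \<dots> + x^(p-1)\<close> is irreducible
  (Eisenstein after \<open>x \<mapsto> x + 1\<close>), this sum vanishes only if the sums \<open>E_r\<close> of the \<open>e_m\<close> over
  the residue classes \<open>m \<equiv> r (mod p)\<close> all agree; but \<open>E_1 - E_0 \<equiv> d (mod n)\<close> and \<open>0 < d < n\<close>.\<close>

lemma map_poly_of_int_add:
  "map_poly (of_int :: int \<Rightarrow> 'a::comm_ring_1) (P + Q) = map_poly of_int P + map_poly of_int Q"
  by (rule poly_eqI) (simp add: coeff_map_poly)

lemma map_poly_of_int_mult:
  "map_poly (of_int :: int \<Rightarrow> 'a::comm_ring_1) (P * Q) = map_poly of_int P * map_poly of_int Q"
  by (rule poly_eqI) (simp add: coeff_map_poly coeff_mult of_int_sum)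

lemma poly_map_poly_of_int_sum:
  "poly (map_poly (of_int :: int \<Rightarrow> 'a::comm_ring_1) (sum P A)) z
    = (\<Sum>x\<in>A. poly (map_poly of_int (P x)) z)"
proof -
  have "map_poly (of_int :: int \<Rightarrow> 'a) (sum P A) = (\<Sum>x\<in>A. map_poly of_int (P x))"
    by (rule poly_eqI) (simp add: coeff_map_poly coeff_sum of_int_sum)
  then show ?thesis by (simp add: poly_sum)
qed

lemma prime_dvd_lower_coeffs_of_factor:
  fixes A B :: "int poly" and q :: int
  assumes q: "prime q" and lead: "\<not> q dvd lead_coeff (A * B)"
    and low: "\<forall>k < degree (A * B). q dvd coeff (A * B) k"
  shows "\<forall>k < degree A. q dvd coeff A k"
proof (rule ccontr)
  assume "\<not> (\<forall>k < degree A. q dvd coeff A k)"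
  then obtain i0 where i0: "i0 < degree A" "\<not> q dvd coeff A i0" by auto
  have lead_B: "\<not> q dvd lead_coeff B"
    using lead by (auto simp: lead_coeff_mult)
  define i where "i = (LEAST k. \<not> q dvd coeff A k)"
  define j where "j = (LEAST k. \<not> q dvd coeff B k)"
  have i: "\<not> q dvd coeff A i" "i \<le> i0" "\<And>u. u < i \<Longrightarrow> q dvd coeff A u"
    unfolding i_def
    subgoal by (rule LeastI) (rule i0(2))
    subgoal by (rule Least_le) (rule i0(2))
    subgoal by (drule not_less_Least) simp
    done
  have j: "\<not> q dvd coeff B j" "j \<le> degree B" "\<And>u. u < j \<Longrightarrow> q dvd coeff B u"
    unfolding j_def
    subgoal by (rule LeastI) (rule lead_B)
    subgoal by (rule Least_le) (rule lead_B)
    subgoal by (drule not_less_Least) simp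
    done
  have "A \<noteq> 0" "B \<noteq> 0" using lead by auto
  then have "i + j < degree (A * B)"
    using i0 i(2) j(2) by (simp add: degree_mult_eq)
  then have "q dvd coeff (A * B) (i + j)" using low by blast
  moreover have "coeff (A * B) (i + j)
      = coeff A i * coeff B j + (\<Sum>u\<in>{..i+j} - {i}. coeff A u * coeff B (i + j - u))"
    by (simp add: coeff_mult sum.remove[of _ i])
  moreover have "q dvd (\<Sum>u\<in>{..i+j} - {i}. coeff A u * coeff B (i + j - u))"
  proof (rule dvd_sum)
    fix u assume "u \<in> {..i+j} - {i}"
    then have "u < i \<or> i + j - u < j" by auto
    then show "q dvd coeff A u * coeff B (i + j - u)" using i(3) j(3) by auto
  qed
  ultimately have "q dvd coeff A i * coeff B j" by (simp add: dvd_add_left_iff)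
  then show False using q i(1) j(1) by (simp add: prime_dvd_mult_iff)
qed

lemma eisenstein_factor_degree:
  fixes A B :: "int poly" and q :: int
  assumes q: "prime q" and lead: "\<not> q dvd lead_coeff (A * B)"
    and low: "\<forall>k < degree (A * B). q dvd coeff (A * B) k"
    and const: "\<not> q\<^sup>2 dvd coeff (A * B) 0"
  shows "degree A = 0 \<or> degree B = 0"
proof (rule ccontr)
  assume "\<not> (degree A = 0 \<or> degree B = 0)"
  moreover have "\<forall>k < degree A. q dvd coeff A k"
    using prime_dvd_lower_coeffs_of_factor[OF q lead low] .
  moreover have "\<forall>k < degree B. q dvd coeff B k"
    using prime_dvd_lower_coeffs_of_factor[of q B A] q lead low by (simp add: mult.commute)
  ultimately have "q * q dvd coeff A 0 * coeff B 0" by (auto intro: mult_dvd_mono)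
  then show False using const by (simp add: coeff_mult_0 power2_eq_square)
qed

definition geometric_poly :: "nat \<Rightarrow> int poly" where
  "geometric_poly p = (\<Sum>r<p. monom 1 r)"

lemma coeff_geometric_poly: "coeff (geometric_poly p) k = (if k < p then 1 else 0)"
  by (simp add: geometric_poly_def coeff_sum coeff_monom)

lemma degree_geometric_poly: "p > 0 \<Longrightarrow> degree (geometric_poly p) = p - 1"
  by (intro antisym degree_le le_degree) (auto simp: coeff_geometric_poly)

lemma coeff_geometric_poly_shift:
  "coeff (pcompose (geometric_poly p) [:1, 1:]) k = (if k < p then int (p choose (k + 1)) else 0)"
proof -
  have "pcompose (monom 1 r) q = q ^ r" for r and q :: "int poly"
    by (induction r) (auto simp: monom_altdef pcompose_mult pcompose_pCons pcompose_1)
  then have "coeff (pcompose (geometric_poly p) [:1, 1:]) k = (\<Sum>r<p. coeff ([:1, 1:] ^ r) k)"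
    by (simp add: geometric_poly_def pcompose_sum coeff_sum)
  also have "\<dots> = (\<Sum>r<p. int (r choose k))"
  proof (intro sum.cong refl)
    fix r
    show "coeff ([:1, 1:] ^ r) k = int (r choose k)"
    proof (cases "k \<le> r")
      case False
      have "degree ([:1, 1 :: int:] ^ r) < k"
        using False degree_power_le[of "[:1, 1 :: int:]" r] by simp
      then show ?thesis using False by (simp add: coeff_eq_0 binomial_eq_0)
    qed (simp add: coeff_linear_poly_power)
  qed
  also have "\<dots> = (if k < p then int (p choose (k + 1)) else 0)"
  proof (cases p)
    case (Suc q)
    then have "(\<Sum>r<p. int (r choose k)) = int (\<Sum>r\<le>q. r choose k)"
      by (simp add: lessThan_Suc_atMost of_nat_sum)
    then show ?thesis using Suc by (auto simp: sum_choose_upper binomial_eq_0)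
  qed simp
  finally show ?thesis .
qed

lemma irreducible_geometric_poly:
  assumes p: "prime p"
  shows "irreducible (geometric_poly p)"
proof (rule irreducibleI)
  have p2: "p \<ge> 2" using p by (simp add: prime_ge_2_nat)
  have deg: "degree (geometric_poly p) = p - 1" using p2 by (simp add: degree_geometric_poly)
  show "geometric_poly p \<noteq> 0" using p2 coeff_geometric_poly[of p 0] by auto
  show "\<not> is_unit (geometric_poly p)" using deg p2 by (auto simp: is_unit_poly_iff)
  fix A B assume AB: "geometric_poly p = A * B"
  let ?shift = "\<lambda>P. pcompose P [:1, 1 :: int:]"
  have shift_AB: "?shift (geometric_poly p) = ?shift A * ?shift B"
    by (simp add: AB pcompose_mult)
  have deg_shift: "degree (?shift P) = degree P" for P by (simp add: degree_pcompose)
  have "degree A = 0 \<or> degree B = 0"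
  proof -
    have "prime (int p)" using p by simp
    moreover have "\<not> int p dvd lead_coeff (?shift (geometric_poly p))"
      using deg p2 by (simp add: deg_shift coeff_geometric_poly_shift)
    moreover have "\<forall>k < degree (?shift (geometric_poly p)). int p dvd coeff (?shift (geometric_poly p)) k"
      using deg p by (auto simp: deg_shift coeff_geometric_poly_shift dvd_choose_prime)
    moreover have "\<not> (int p)\<^sup>2 dvd coeff (?shift (geometric_poly p)) 0"
      using p2 coeff_geometric_poly_shift[of p 0] by (simp add: power2_eq_square)
    ultimately have "degree (?shift A) = 0 \<or> degree (?shift B) = 0"
      unfolding shift_AB by (rule eisenstein_factor_degree)
    then show ?thesis by (simp add: deg_shift)
  qed
  moreover have "lead_coeff (A * B) = 1"
    using deg p2 by (simp add: AB[symmetric] coeff_geometric_poly)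
  then have "lead_coeff A * lead_coeff B = 1" by (metis lead_coeff_mult)
  then have "is_unit (lead_coeff A)" "is_unit (lead_coeff B)"
    by (metis dvd_triv_left dvd_triv_right)+
  ultimately show "is_unit A \<or> is_unit B" by (metis degree_0_id is_unit_poly_iff)
qed

lemma least_degree_root_pseudo_dvd:
  fixes M Q :: "int poly" and z :: "'a::comm_ring_1"
  assumes M: "M \<noteq> 0" "poly (map_poly of_int M) z = 0"
    and M_least: "\<And>R. R \<noteq> 0 \<Longrightarrow> poly (map_poly of_int R) z = 0 \<Longrightarrow> degree M \<le> degree R"
    and Q: "poly (map_poly of_int Q) z = 0"
  shows "\<exists>a. a \<noteq> 0 \<and> M dvd [:a:] * Q"
proof -
  obtain a S where aS: "a \<noteq> 0" "smult a Q = M * S + pseudo_mod Q M"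
    using pseudo_mod(1)[OF M(1)] by blast
  have "poly (map_poly of_int (pseudo_mod Q M)) z = 0"
    using arg_cong[OF aS(2), of "\<lambda>R. poly (map_poly of_int R) z"] M(2) Q
    by (simp add: map_poly_of_int_add map_poly_of_int_mult map_poly_smult)
  moreover have "pseudo_mod Q M = 0 \<or> degree (pseudo_mod Q M) < degree M"
    by (rule pseudo_mod(2)[OF M(1)])
  ultimately have "pseudo_mod Q M = 0"
    using M_least[of "pseudo_mod Q M"] by linarith
  with aS have "[:a:] * Q = M * S" by simp
  then show ?thesis using aS(1) by (metis dvd_triv_left)
qed

text \<open>A nonzero polynomial \<open>M\<close> of least degree vanishing at \<open>z\<close> is divisible by \<open>\<Phi>\<close>,
  and divides a nonzero multiple of \<open>P\<close>.\<close>
lemma prime_int_poly_dvd_if_common_root: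
  fixes \<Phi> P :: "int poly" and z :: "'a::{comm_ring_1, ring_char_0}"
  assumes prime: "prime_elem \<Phi>"
    and root_\<Phi>: "poly (map_poly of_int \<Phi>) z = 0" and root_P: "poly (map_poly of_int P) z = 0"
  shows "\<Phi> dvd P"
proof -
  have not_const: "degree R \<noteq> 0" if "R \<noteq> 0" "poly (map_poly of_int R) z = 0" for R
  proof
    assume "degree R = 0"
    then obtain c where "R = [:c:]" by (elim degree_eq_zeroE)
    then show False using that by (simp add: map_poly_pCons)
  qed
  have "\<Phi> \<noteq> 0" using prime by (simp add: prime_elem_def)
  then have "\<exists>M. (M \<noteq> 0 \<and> poly (map_poly of_int M) z = 0)
      \<and> (\<forall>R. R \<noteq> 0 \<and> poly (map_poly of_int R) z = 0 \<longrightarrow> degree M \<le> degree R)"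
    using root_\<Phi> by (intro ex_has_least_nat[of _ \<Phi>]) simp
  then obtain M where M: "M \<noteq> 0" "poly (map_poly of_int M) z = 0"
    and M_least: "\<And>R. R \<noteq> 0 \<Longrightarrow> poly (map_poly of_int R) z = 0 \<Longrightarrow> degree M \<le> degree R"
    by blast
  have pseudo_dvd: "\<exists>a. a \<noteq> 0 \<and> M dvd [:a:] * R" if "poly (map_poly of_int R) z = 0" for R
    using M M_least that by (rule least_degree_root_pseudo_dvd)
  have \<Phi>_dvd_M: "\<Phi> dvd M"
  proof -
    obtain a where a: "a \<noteq> 0" "M dvd [:a:] * \<Phi>" using pseudo_dvd[OF root_\<Phi>] by blast
    then obtain S where S: "[:a:] * \<Phi> = M * S" by (elim dvdE)
    have "\<not> \<Phi> dvd S"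
    proof
      assume "\<Phi> dvd S"
      then obtain V where "S = \<Phi> * V" by (elim dvdE)
      with S have "[:a:] * \<Phi> = (M * V) * \<Phi>" by (simp only: mult.assoc mult.commute[of \<Phi> V])
      with \<open>\<Phi> \<noteq> 0\<close> have "M * V = [:a:]" by (metis mult_cancel_right)
      moreover from this have "V \<noteq> 0" using a(1) by auto
      ultimately have "degree M = 0" using degree_mult_eq[OF M(1), of V] by simp
      then show False using not_const M by blast
    qed
    moreover have "\<Phi> dvd M * S" unfolding S[symmetric] by (rule dvd_triv_right)
    ultimately show ?thesis using prime by (simp add: prime_elem_dvd_mult_iff)
  qed
  obtain a where a: "a \<noteq> 0" "M dvd [:a:] * P" using pseudo_dvd[OF root_P] by blast
  have "\<Phi> dvd [:a:] * P" using \<Phi>_dvd_M a(2) by (rule dvd_trans)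
  moreover have "\<not> \<Phi> dvd [:a:]"
  proof
    assume "\<Phi> dvd [:a:]"
    then have "degree \<Phi> = 0" using a(1) dvd_imp_degree_le[of \<Phi> "[:a:]"] by simp
    then show False using not_const \<open>\<Phi> \<noteq> 0\<close> root_\<Phi> by blast
  qed
  ultimately show ?thesis using prime_elem_dvd_mult_iff[OF prime, of "[:a:]" P] by blast
qed

lemma sum_prime_root_of_unity_eq_0_imp_const:
  fixes E :: "nat \<Rightarrow> int" and z :: "'a::field_char_0"
  assumes p: "prime p" and z: "z ^ p = 1" "z \<noteq> 1"
    and sum: "(\<Sum>r<p. of_int (E r) * z ^ r) = 0" and r: "r < p"
  shows "E r = E 0"
proof -
  have p_pos: "p > 0" using p by (simp add: prime_gt_0_nat)
  define Q where "Q = (\<Sum>r<p. monom (E r) r)"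
  have "geometric_poly p dvd Q"
  proof (rule prime_int_poly_dvd_if_common_root)
    show "prime_elem (geometric_poly p)"
      using irreducible_geometric_poly[OF p] by (rule irreducible_imp_prime_poly)
    show "poly (map_poly of_int (geometric_poly p)) z = 0"
      using z by (simp add: geometric_poly_def poly_map_poly_of_int_sum map_poly_monom poly_monom geometric_sum)
    show "poly (map_poly of_int Q) z = 0"
      using sum by (simp add: Q_def poly_map_poly_of_int_sum map_poly_monom poly_monom)
  qed
  then obtain T where T: "Q = geometric_poly p * T" by (elim dvdE)
  have coeff_Q: "coeff Q k = (if k < p then E k else 0)" for k
    by (simp add: Q_def coeff_sum coeff_monom)
  have "degree T = 0"
  proof (cases "T = 0")
    case False
    have "degree Q \<le> p - 1" by (rule degree_le) (auto simp: coeff_Q)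
    moreover have "geometric_poly p \<noteq> 0"
      using coeff_geometric_poly[of p 0] p_pos by (metis coeff_0 zero_neq_one)
    ultimately show ?thesis
      using False p_pos degree_mult_eq[of "geometric_poly p" T] by (simp add: T degree_geometric_poly)
  qed simp
  then obtain c where "T = [:c:]" by (elim degree_eq_zeroE)
  then have "E k = c" if "k < p" for k
    using T coeff_Q[of k] that by (simp add: coeff_geometric_poly)
  then show ?thesis using r p_pos by simp
qed

definition unit_root :: "nat \<Rightarrow> int \<Rightarrow> complex" where
  "unit_root n x = exp (2 * pi * \<i> * of_int x / of_nat n)"

lemma unit_root_0 [simp]: "unit_root n 0 = 1"
  by (simp add: unit_root_def)

lemma unit_root_add: "unit_root n (x + y) = unit_root n x * unit_root n y"
  unfolding unit_root_def by (simp add: exp_add[symmetric] add_divide_distrib distrib_left)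

lemma unit_root_mult_nat: "unit_root n (int m * x) = unit_root n x ^ m"
  unfolding unit_root_def by (simp add: exp_of_nat_mult[symmetric] mult_ac)

lemma cnj_unit_root: "cnj (unit_root n x) = unit_root n (- x)"
  unfolding unit_root_def by (simp add: exp_cnj)

lemma norm_unit_root [simp]: "norm (unit_root n x) = 1"
  unfolding unit_root_def by simp

lemma unit_root_eq_1_iff:
  assumes "n > 0"
  shows "unit_root n x = 1 \<longleftrightarrow> int n dvd x"
proof -
  have "unit_root n x = 1 \<longleftrightarrow> (\<exists>k::int. 2 * pi * x / n = of_int (2 * k) * pi)"
    unfolding unit_root_def exp_eq_1 by simp
  also have "\<dots> \<longleftrightarrow> (\<exists>k::int. real_of_int x = real_of_int (k * int n))"
    using assms by (intro ex_cong1) (auto simp: field_simps)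
  also have "\<dots> \<longleftrightarrow> int n dvd x"
    by (auto simp: dvd_def mult.commute simp del: of_int_mult)
  finally show ?thesis .
qed

lemma unit_root_cong:
  assumes "int n dvd x - y"
  shows "unit_root n x = unit_root n y"
proof (cases "n = 0")
  case False
  then have "unit_root n (x - y) = 1" using assms by (simp add: unit_root_eq_1_iff)
  then show ?thesis using unit_root_add[of n y "x - y"] by simp
qed (use assms in simp)

lemma sum_unit_root:
  assumes "n > 0"
  shows "(\<Sum>m<n. unit_root n (int m * x)) = (if int n dvd x then of_nat n else 0)"
proof (cases "int n dvd x")
  case True
  then have "unit_root n (int m * x) = 1" for m
    using assms by (simp add: unit_root_eq_1_iff)
  then show ?thesis using True by simp
next
  case False
  have "unit_root n x ^ n = 1"
    using assms by (simp add: unit_root_mult_nat[symmetric] unit_root_eq_1_iff)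
  moreover have "unit_root n x \<noteq> 1" using False assms by (simp add: unit_root_eq_1_iff)
  ultimately show ?thesis using False by (simp add: unit_root_mult_nat geometric_sum)
qed

lemma int_dvd_diff_less_iff: "j < n \<Longrightarrow> k < n \<Longrightarrow> int n dvd int j - int k \<longleftrightarrow> j = k"
  by (simp add: mod_eq_dvd_iff[symmetric])

lemma reflect_mod_involution:
  assumes "s < n"
  shows "nat ((k - (k - int s) mod int n) mod int n) = s"
proof -
  have "(k - (k - int s) mod int n) mod int n = int s"
    using assms by (simp add: mod_diff_right_eq)
  then show ?thesis by simp
qed

lemma sum_reflect_mod:
  fixes g :: "nat \<Rightarrow> 'a::comm_monoid_add" and k :: int
  assumes "n > 0"
  shows "(\<Sum>s<n. g (nat ((k - int s) mod int n))) = (\<Sum>s<n. g s)"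
  by (rule sum.reindex_bij_witness[where i = "\<lambda>s. nat ((k - int s) mod int n)"
        and j = "\<lambda>s. nat ((k - int s) mod int n)"])
    (use assms in \<open>auto simp: reflect_mod_involution nat_less_iff\<close>)

lemma dvd_diff_reflect_mod: "n > 0 \<Longrightarrow> int n dvd (k - int s) - int (nat ((k - int s) mod int n))"
  by (simp add: dvd_minus_mod)

lemma circ_carrier: "circ n b \<in> carrier_mat n n"
  unfolding circ_def by simp

lemma circ_index [simp]: "j < n \<Longrightarrow> k < n \<Longrightarrow> circ n b $$ (j, k) = b (nat ((int k - int j) mod int n))"
  unfolding circ_def by simp

lemma circ_smult: "c \<cdot>\<^sub>m circ n b = circ n (\<lambda>s. c * b s)"
  by (rule eq_matI) (auto simp: circ_def)

text \<open>The vector \<open>(\<omega>^(mk))_k\<close>, \<open>\<omega> = unit_root n 1\<close>, is an eigenvector of \<open>circ n b\<close>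
  for this eigenvalue.\<close>
definition circ_eigenvalue :: "nat \<Rightarrow> (nat \<Rightarrow> complex) \<Rightarrow> nat \<Rightarrow> complex" where
  "circ_eigenvalue n b m = (\<Sum>s<n. b s * unit_root n (int m * int s))"

lemma circ_eigenvalue_smult: "circ_eigenvalue n (\<lambda>s. c * b s) m = c * circ_eigenvalue n b m"
  by (simp add: circ_eigenvalue_def sum_distrib_left mult.assoc)

lemma circ_left_eigenvector:
  assumes k: "k < n"
  shows "(\<Sum>l<n. unit_root n (- (int m * int l)) * circ n b $$ (l, k))
    = circ_eigenvalue n b m * unit_root n (- (int m * int k))"
proof -
  let ?r = "\<lambda>l. nat ((int k - int l) mod int n)"
  have "(\<Sum>l<n. unit_root n (- (int m * int l)) * circ n b $$ (l, k))
      = (\<Sum>l<n. unit_root n (- (int m * int l)) * b (?r l))"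
    using k by (intro sum.cong) auto
  also have "\<dots> = (\<Sum>s<n. unit_root n (- (int m * int (?r s))) * b (?r (?r s)))"
    using k by (intro sum_reflect_mod[symmetric]) simp
  also have "\<dots> = (\<Sum>s<n. b s * unit_root n (int m * int s - int m * int k))"
  proof (intro sum.cong refl)
    fix s assume s: "s \<in> {..<n}"
    have "int n dvd int m * ((int k - int s) - int (?r s))"
      using k by (intro dvd_mult dvd_diff_reflect_mod) simp
    then have "int n dvd - (int m * int (?r s)) - (int m * int s - int m * int k)"
      by (simp add: algebra_simps)
    then show "unit_root n (- (int m * int (?r s))) * b (?r (?r s))
        = b s * unit_root n (int m * int s - int m * int k)"
      using s by (simp add: reflect_mod_involution unit_root_cong)
  qed
  also have "\<dots> = circ_eigenvalue n b m * unit_root n (- (int m * int k))"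
    by (simp add: circ_eigenvalue_def sum_distrib_right mult.assoc unit_root_add[symmetric])
  finally show ?thesis .
qed

lemma index_pow_mat_Suc:
  assumes "A \<in> carrier_mat n n" "j < n" "k < n"
  shows "(A ^\<^sub>m Suc N) $$ (j, k) = (\<Sum>l<n. (A ^\<^sub>m N) $$ (j, l) * A $$ (l, k))"
  using assms pow_carrier_mat[OF assms(1), of N]
  by (simp add: index_mult_mat scalar_prod_def atLeast0LessThan)

lemma circ_power_entry:
  assumes j: "j < n" and k: "k < n"
  shows "(circ n b ^\<^sub>m N) $$ (j, k)
    = (\<Sum>m<n. circ_eigenvalue n b m ^ N * unit_root n (int m * (int j - int k))) / of_nat n"
  using k
proof (induction N arbitrary: k)
  case 0
  then show ?case
    using j circ_carrier[of n b] by (simp add: sum_unit_root int_dvd_diff_less_iff)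
next
  case (Suc N)
  let ?ev = "circ_eigenvalue n b" and ?A = "circ n b"
  have "(?A ^\<^sub>m Suc N) $$ (j, k) = (\<Sum>l<n. (?A ^\<^sub>m N) $$ (j, l) * ?A $$ (l, k))"
    using j Suc.prems by (intro index_pow_mat_Suc circ_carrier)
  also have "\<dots> = (\<Sum>l<n. \<Sum>m<n. ?ev m ^ N * unit_root n (int m * int j)
      * (unit_root n (- (int m * int l)) * ?A $$ (l, k)) / of_nat n)"
    by (intro sum.cong refl)
      (simp add: Suc.IH sum_divide_distrib sum_distrib_left sum_distrib_right right_diff_distrib
        unit_root_add[symmetric] mult_ac)
  also have "\<dots> = (\<Sum>m<n. ?ev m ^ N * unit_root n (int m * int j)
      * (\<Sum>l<n. unit_root n (- (int m * int l)) * ?A $$ (l, k))) / of_nat n"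
    by (subst sum.swap) (simp add: sum_divide_distrib sum_distrib_left)
  also have "\<dots> = (\<Sum>m<n. ?ev m ^ Suc N * unit_root n (int m * (int j - int k))) / of_nat n"
    unfolding circ_left_eigenvector[OF Suc.prems]
    by (simp add: right_diff_distrib unit_root_add[symmetric] mult_ac)
  finally show ?case .
qed

lemma mat_exp_circ_entry:
  assumes j: "j < n" and k: "k < n"
  shows "mat_exp (c \<cdot>\<^sub>m circ n a) $$ (j, k)
    = (\<Sum>m<n. exp (c * circ_eigenvalue n a m) * unit_root n (int m * (int j - int k))) / of_nat n"
proof -
  let ?b = "\<lambda>s. c * a s" and ?\<omega> = "\<lambda>m. unit_root n (int m * (int j - int k)) / of_nat n"
  have exp_sums: "(\<lambda>N. x ^ N / of_nat (fact N)) sums exp x" for x :: complex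
    using exp_converges[of x] by (simp add: scaleR_conv_of_real divide_inverse_commute)
  have "mat_exp (c \<cdot>\<^sub>m circ n a) $$ (j, k) = (\<Sum>N. (circ n ?b ^\<^sub>m N) $$ (j, k) / of_nat (fact N))"
    using j k circ_carrier[of n ?b] by (simp add: circ_smult mat_exp_def)
  also have "\<dots> = (\<Sum>N. \<Sum>m<n. (c * circ_eigenvalue n a m) ^ N / of_nat (fact N) * ?\<omega> m)"
    using j k by (simp add: circ_power_entry circ_eigenvalue_smult sum_divide_distrib mult.commute)
  also have "\<dots> = (\<Sum>m<n. exp (c * circ_eigenvalue n a m) * ?\<omega> m)"
    by (intro sums_unique[symmetric] sums_sum sums_mult2 exp_sums)
  finally show ?thesis by (simp add: sum_divide_distrib)
qed

lemma hermitian_circ_coeff: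
  assumes "hermitian_mat (circ n a)" and s: "s < n"
  shows "cnj (a s) = a (nat ((- int s) mod int n))"
proof -
  have "circ n a $$ (s, 0) = cnj (circ n a $$ (0, s))"
    using assms circ_carrier[of n a] unfolding hermitian_mat_def by auto
  then show ?thesis using s by simp
qed

lemma hermitian_circ_eigenvalue_real:
  assumes herm: "hermitian_mat (circ n a)"
  shows "cnj (circ_eigenvalue n a m) = circ_eigenvalue n a m"
proof (cases "n = 0")
  case False
  let ?r = "\<lambda>s. nat ((0 - int s) mod int n)"
  have "cnj (circ_eigenvalue n a m) = (\<Sum>s<n. a (?r s) * unit_root n (- (int m * int s)))"
    unfolding circ_eigenvalue_def
    by (simp add: hermitian_circ_coeff[OF herm] cnj_unit_root)
  also have "\<dots> = (\<Sum>s<n. a (?r s) * unit_root n (int m * int (?r s)))"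
  proof (intro sum.cong refl arg_cong[where f = "(*) _"] unit_root_cong)
    fix s
    have "int n dvd int m * ((0 - int s) - int (?r s))"
      using False by (intro dvd_mult dvd_diff_reflect_mod) simp
    then show "int n dvd - (int m * int s) - int m * int (?r s)"
      by (simp add: algebra_simps)
  qed
  also have "\<dots> = circ_eigenvalue n a m"
    unfolding circ_eigenvalue_def using False by (intro sum_reflect_mod) simp
  finally show ?thesis .
qed (simp add: circ_eigenvalue_def)

lemma circ_coeff_eq_eigenvalue_sum:
  assumes d: "d < n"
  shows "of_nat n * a d = (\<Sum>m<n. circ_eigenvalue n a m * unit_root n (- int d) ^ m)"
proof -
  have "(\<Sum>m<n. circ_eigenvalue n a m * unit_root n (- int d) ^ m)
      = (\<Sum>m<n. \<Sum>s<n. a s * unit_root n (int m * (int s - int d)))"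
    by (simp add: circ_eigenvalue_def sum_distrib_right unit_root_mult_nat[symmetric] mult.assoc
        unit_root_add[symmetric] right_diff_distrib)
  also have "\<dots> = (\<Sum>s<n. a s * (\<Sum>m<n. unit_root n (int m * (int s - int d))))"
    by (subst sum.swap) (simp add: sum_distrib_left)
  also have "\<dots> = (\<Sum>s<n. if s = d then a d * of_nat n else 0)"
    using d by (intro sum.cong refl) (simp add: sum_unit_root int_dvd_diff_less_iff)
  finally show ?thesis using d by (simp add: mult.commute)
qed

lemma unimodular_eq_mean_if_norm_sum_eq_card:
  fixes z :: "'i \<Rightarrow> complex"
  assumes A: "finite A" and norm_z: "\<And>i. i \<in> A \<Longrightarrow> norm (z i) = 1"
    and norm_sum: "norm (sum z A) = card A" and i: "i \<in> A"
  shows "z i = sum z A / of_nat (card A)"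
proof -
  define u where "u = sum z A"
  have norm_u: "norm u = card A" using norm_sum by (simp add: u_def)
  have Re_le: "Re (z l * cnj u) \<le> card A" if "l \<in> A" for l
  proof -
    have "Re (z l * cnj u) \<le> norm (z l * cnj u)" by (rule complex_Re_le_cmod)
    also have "\<dots> = card A" using norm_z[OF that] norm_u by (simp add: norm_mult)
    finally show ?thesis .
  qed
  have u_cnj: "u * cnj u = of_nat (card A) * of_nat (card A)"
    using complex_norm_square[of u] norm_u by (simp add: power2_eq_square)
  have "(\<Sum>l\<in>A. z l * cnj u) = u * cnj u" by (simp only: u_def sum_distrib_right)
  then have "(\<Sum>l\<in>A. Re (z l * cnj u)) = Re (u * cnj u)" by (simp only: Re_sum[symmetric])
  also have "\<dots> = (\<Sum>l\<in>A. real (card A))"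
    unfolding u_cnj by simp
  finally have "(\<Sum>l\<in>A. real (card A) - Re (z l * cnj u)) = 0"
    by (simp add: sum_subtractf)
  then have Re_eq: "Re (z i * cnj u) = card A"
    using sum_nonneg_eq_0_iff[OF A, of "\<lambda>l. real (card A) - Re (z l * cnj u)"] Re_le i by auto
  have "norm (z i * cnj u) = card A"
    using norm_z[OF i] norm_u by (simp add: norm_mult)
  then have "(Im (z i * cnj u))\<^sup>2 = 0"
    using Re_eq cmod_power2[of "z i * cnj u"] by simp
  then have "z i * cnj u = of_nat (card A)"
    using Re_eq by (simp add: complex_eq_iff)
  have cnj_u: "cnj u * u = of_nat (card A) * of_nat (card A)"
    using u_cnj by (simp add: mult.commute)
  have "card A > 0" using A i card_gt_0_iff by blast
  then have "z i = (z i * cnj u) * u / (cnj u * u)"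
    by (simp add: cnj_u mult.assoc)
  also have "\<dots> = u / of_nat (card A)"
    using \<open>card A > 0\<close> by (simp add: cnj_u \<open>z i * cnj u = of_nat (card A)\<close>)
  finally show ?thesis by (simp add: u_def)
qed

lemma unit_root_phase_progression:
  fixes t r r\<^sub>0 :: real
  assumes n: "n > 0" and t: "t \<noteq> 0"
    and phase: "exp (- \<i> * t * r) * unit_root n (int m) = exp (- \<i> * t * r\<^sub>0)"
  obtains k :: int where "int n dvd k - int m" and "r = r\<^sub>0 + 2 * pi / (t * n) * k"
proof -
  let ?\<theta> = "\<i> * complex_of_real (- t * (r - r\<^sub>0) + 2 * pi * m / n)"
  have "?\<theta> + - \<i> * t * r\<^sub>0 = - \<i> * t * r + 2 * pi * \<i> * of_int (int m) / of_nat n"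
    by (simp add: algebra_simps)
  then have "exp ?\<theta> * exp (- \<i> * t * r\<^sub>0) = exp (- \<i> * t * r) * unit_root n (int m)"
    by (simp add: unit_root_def mult_exp_exp)
  then have "exp ?\<theta> = 1" using phase by simp
  then obtain K :: int where K: "- t * (r - r\<^sub>0) + 2 * pi * m / n = 2 * K * pi"
    unfolding exp_eq_1 by auto
  show thesis
  proof (rule that)
    show "int n dvd (int m - int n * K) - int m" by simp
    show "r = r\<^sub>0 + 2 * pi / (t * n) * real_of_int (int m - int n * K)"
      using K t n by (simp add: field_simps)
  qed
qed

lemma hermitian_circ_pst_eigenvalues:
  fixes t :: real
  assumes herm: "hermitian_mat (circ n a)" and n: "1 < n" and t: "t \<noteq> 0"
    and pst: "cmod (mat_exp ((- \<i> * complex_of_real t) \<cdot>\<^sub>m circ n a) $$ (1, 0)) = 1"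
  obtains e :: "nat \<Rightarrow> int" where
    "\<And>m. m < n \<Longrightarrow> int n dvd e m - int m"
    "\<And>m. m < n \<Longrightarrow> circ_eigenvalue n a m
       = circ_eigenvalue n a 0 + complex_of_real (2 * pi / (t * n)) * of_int (e m)"
proof -
  define r where "r m = Re (circ_eigenvalue n a m)" for m
  have eigenvalue_r: "circ_eigenvalue n a m = complex_of_real (r m)" for m
    using hermitian_circ_eigenvalue_real[OF herm, of m] unfolding r_def complex_eq_iff by simp
  define z where "z m = exp (- \<i> * t * r m) * unit_root n (int m)" for m
  have norm_z: "norm (z m) = 1" for m
    by (simp add: z_def norm_mult)
  have "mat_exp ((- \<i> * complex_of_real t) \<cdot>\<^sub>m circ n a) $$ (1, 0) = sum z {..<n} / of_nat n"
    using n by (simp add: mat_exp_circ_entry eigenvalue_r z_def mult.assoc)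
  then have "norm (sum z {..<n}) = card {..<n}"
    using pst n by (simp add: norm_divide)
  then have z_mean: "z m = sum z {..<n} / of_nat n" if "m < n" for m
    using unimodular_eq_mean_if_norm_sum_eq_card[of "{..<n}" z m] norm_z that by simp
  have "\<forall>m\<in>{..<n}. \<exists>k::int. int n dvd k - int m \<and> r m = r 0 + 2 * pi / (t * n) * k"
  proof
    fix m assume "m \<in> {..<n}"
    then have "z m = z 0" using z_mean[of m] z_mean[of 0] n by simp
    then have phase: "exp (- \<i> * t * r m) * unit_root n (int m) = exp (- \<i> * t * r 0)"
      by (simp add: z_def)
    obtain k where "int n dvd k - int m" "r m = r 0 + 2 * pi / (t * n) * k"
      by (rule unit_root_phase_progression[OF _ t phase]) (use n in simp)
    then show "\<exists>k::int. int n dvd k - int m \<and> r m = r 0 + 2 * pi / (t * n) * k" by blast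
  qed
  then have "\<exists>e. \<forall>m\<in>{..<n}. int n dvd e m - int m \<and> r m = r 0 + 2 * pi / (t * n) * e m"
    by (rule bchoice)
  then obtain e where e: "\<forall>m\<in>{..<n}. int n dvd e m - int m \<and> r m = r 0 + 2 * pi / (t * n) * e m"
    by blast
  show thesis
  proof (rule that)
    fix m assume "m < n"
    then have "int n dvd e m - int m" and "r m = r 0 + 2 * pi / (t * n) * e m"
      using e lessThan_iff by blast+
    then show "int n dvd e m - int m"
      and "circ_eigenvalue n a m = circ_eigenvalue n a 0 + complex_of_real (2 * pi / (t * n)) * of_int (e m)"
      by (simp_all add: eigenvalue_r)
  qed
qed

lemma circ_coeff_of_eigenvalue_progression:
  assumes d: "0 < d" "d < n"
    and eig: "\<And>m. m < n \<Longrightarrow> circ_eigenvalue n a m = c + \<kappa> * of_int (e m)"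
  shows "of_nat n * a d = \<kappa> * (\<Sum>m<n. of_int (e m) * unit_root n (- int d) ^ m)"
proof -
  let ?\<zeta> = "unit_root n (- int d)"
  have "?\<zeta> \<noteq> 1" using d by (simp add: unit_root_eq_1_iff nat_dvd_not_less)
  moreover have "?\<zeta> ^ n = 1" using d by (simp add: unit_root_mult_nat[symmetric] unit_root_eq_1_iff)
  ultimately have geometric: "(\<Sum>m<n. ?\<zeta> ^ m) = 0" by (simp add: geometric_sum)
  have "of_nat n * a d = (\<Sum>m<n. (c + \<kappa> * of_int (e m)) * ?\<zeta> ^ m)"
    unfolding circ_coeff_eq_eigenvalue_sum[OF d(2)] by (intro sum.cong refl) (simp add: eig)
  also have "\<dots> = c * (\<Sum>m<n. ?\<zeta> ^ m) + \<kappa> * (\<Sum>m<n. of_int (e m) * ?\<zeta> ^ m)"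
    by (simp add: distrib_right sum.distrib sum_distrib_left mult.assoc)
  finally show ?thesis by (simp add: geometric)
qed

lemma sum_lessThan_mult_by_residue:
  fixes g :: "nat \<Rightarrow> 'a::comm_monoid_add"
  shows "(\<Sum>i<d * p. g i) = (\<Sum>r<p. \<Sum>q<d. g (q * p + r))"
proof -
  have "(\<Sum>i<d * p. g i) = (\<Sum>q<d. sum g {q * p..<q * p + p})"
    by (rule sum.nat_group[symmetric])
  also have "\<dots> = (\<Sum>q<d. \<Sum>r<p. g (q * p + r))"
    by (rule sum.cong) (simp_all add: sum.atLeastLessThan_shift_0 atLeast0LessThan)
  also have "\<dots> = (\<Sum>r<p. \<Sum>q<d. g (q * p + r))"
    by (rule sum.swap)
  finally show ?thesis .
qed

text \<open>Grouping the exponents by their residue mod \<open>p\<close> gives a vanishing sum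
  \<open>\<Sum>r<p. E r * z ^ r\<close>, so \<open>E 1 = E 0\<close>; but \<open>E 1 - E 0 \<equiv> d (mod d * p)\<close>.\<close>
lemma sum_congruent_coeffs_prime_root_of_unity_nonzero:
  fixes e :: "nat \<Rightarrow> int" and z :: "'a::field_char_0"
  assumes p: "prime p" and z: "z ^ p = 1" "z \<noteq> 1" and d: "d > 0"
    and e: "\<And>m. m < d * p \<Longrightarrow> int (d * p) dvd e m - int m"
  shows "(\<Sum>m<d * p. of_int (e m) * z ^ m) \<noteq> 0"
proof
  assume sum_0: "(\<Sum>m<d * p. of_int (e m) * z ^ m) = 0"
  define E where "E r = (\<Sum>q<d. e (q * p + r))" for r
  have p1: "1 < p" using p by (rule prime_gt_1_nat)
  have z_period: "z ^ (q * p + r) = z ^ r" for q r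
    by (simp add: power_add mult.commute[of q p] power_mult z(1))
  have "(\<Sum>m<d * p. of_int (e m) * z ^ m) = (\<Sum>r<p. \<Sum>q<d. of_int (e (q * p + r)) * z ^ (q * p + r))"
    by (rule sum_lessThan_mult_by_residue)
  also have "\<dots> = (\<Sum>r<p. of_int (E r) * z ^ r)"
    by (simp add: E_def z_period sum_distrib_right)
  finally have "E 1 = E 0"
    using sum_prime_root_of_unity_eq_0_imp_const[OF p z, of E 1] sum_0 p1 by simp
  moreover have "int (d * p) dvd (E 1 - E 0) - int d"
  proof -
    have "(E 1 - E 0) - int d = (\<Sum>q<d. (e (q * p + 1) - e (q * p)) - 1)"
      by (simp add: E_def sum_subtractf)
    also have "int (d * p) dvd \<dots>"
    proof (rule dvd_sum)
      fix q assume "q \<in> {..<d}"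
      then have "p + q * p \<le> d * p" using mult_le_mono1[of "Suc q" d p] by simp
      then have "q * p + 1 < d * p" "q * p < d * p" using p1 by linarith+
      then have "int (d * p) dvd (e (q * p + 1) - int (q * p + 1)) - (e (q * p) - int (q * p))"
        by (intro dvd_diff e)
      then show "int (d * p) dvd (e (q * p + 1) - e (q * p)) - 1"
        by (simp add: algebra_simps)
    qed
    finally show ?thesis .
  qed
  ultimately have "int (d * p) dvd int d" by simp
  then show False using d p1 by (simp add: nat_dvd_not_less)
qed

lemma circ_coeff_nonzero_if_eigenvalue_progression:
  assumes d: "0 < d" and p: "prime p" and n: "n = d * p" and \<kappa>: "\<kappa> \<noteq> 0"
    and e_cong: "\<And>m. m < n \<Longrightarrow> int n dvd e m - int m"
    and e_eig: "\<And>m. m < n \<Longrightarrow> circ_eigenvalue n a m = c + \<kappa> * of_int (e m)"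
  shows "a d \<noteq> 0"
proof -
  let ?\<zeta> = "unit_root n (- int d)"
  have "1 < p" using p by (rule prime_gt_1_nat)
  then have "d < n" unfolding n using d by simp
  have \<zeta>_p: "?\<zeta> ^ p = 1"
    using unit_root_eq_1_iff[of n "int p * - int d"] \<open>1 < p\<close> d n
    by (simp add: unit_root_mult_nat[symmetric])
  have \<zeta>_ne_1: "?\<zeta> \<noteq> 1"
    using d \<open>d < n\<close> by (simp add: unit_root_eq_1_iff nat_dvd_not_less)
  have "(\<Sum>m<d * p. of_int (e m) * ?\<zeta> ^ m) \<noteq> 0"
    by (rule sum_congruent_coeffs_prime_root_of_unity_nonzero[OF p \<zeta>_p \<zeta>_ne_1 d])
      (use e_cong in \<open>simp add: n\<close>)
  then have "(\<Sum>m<n. of_int (e m) * ?\<zeta> ^ m) \<noteq> 0" unfolding n[symmetric] .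
  moreover have "of_nat n * a d = \<kappa> * (\<Sum>m<n. of_int (e m) * ?\<zeta> ^ m)"
    using d \<open>d < n\<close> e_eig by (rule circ_coeff_of_eigenvalue_progression)
  ultimately show ?thesis using \<kappa> \<open>d < n\<close> by auto
qed

theorem lemma6:
  fixes n d :: nat and a :: "nat \<Rightarrow> complex"
  assumes "hermitian_mat (circ n a)"
    and "universal_pst (circ n a)"
    and "d dvd n" and "odd d" and "prime (n div d)"
  shows "a d \<noteq> 0"
proof -
  define p where "p = n div d"
  \<comment> \<open>Oddness of \<open>d\<close> is only needed to exclude \<open>d = 0\<close>.\<close>
  have d: "0 < d" using \<open>odd d\<close> by (rule odd_pos)
  have n: "n = d * p" using \<open>d dvd n\<close> by (simp add: p_def)
  have p: "prime p" using assms(5) by (simp add: p_def)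
  have "p \<le> n" unfolding n using d by simp
  then have "1 < n" using prime_gt_1_nat[OF p] by linarith
  then obtain t :: real where "t > 0"
    and pst: "cmod (mat_exp ((- \<i> * complex_of_real t) \<cdot>\<^sub>m circ n a) $$ (1, 0)) = 1"
    using \<open>universal_pst (circ n a)\<close> circ_carrier[of n a] unfolding universal_pst_def by fastforce
  obtain e where e_cong: "\<And>m. m < n \<Longrightarrow> int n dvd e m - int m"
    and e_eig: "\<And>m. m < n \<Longrightarrow> circ_eigenvalue n a m
      = circ_eigenvalue n a 0 + complex_of_real (2 * pi / (t * n)) * of_int (e m)"
    using hermitian_circ_pst_eigenvalues[OF assms(1) \<open>1 < n\<close> _ pst] \<open>t > 0\<close>
    by (metis less_irrefl)
  show ?thesis
    by (rule circ_coeff_nonzero_if_eigenvalue_progression[OF d p n _ e_cong e_eig])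
      (use \<open>t > 0\<close> \<open>1 < n\<close> in simp)
qed

end
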